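(* Let $\mathsf S,\mathsf T$ be trees. Every morphism of polynomial endofunctors $\overline{\mathsf S}\to\overline{\mathsf T}$ is a morphism of monads. Equivalently, the forgetful functor $\mathbf{Tree}\to\mathbf{PolyEnd}$ is full.
   Context: A polynomial endofunctor is a diagram of sets $P_0\xleftarrow{s}P_2\xrightarrow{p}P_1\xrightarrow{t}P_0$ with $p$ having finite fibres; a morphism (in $\mathbf{PolyEnd}$) is a triple of maps commuting with $s,p,t$ whose middle square is a pullback. A tree is a polynomial endofunctor with all sets finite, $t$ injective, $s$ injective with singleton complement (the root), and such that iterating $\sigma$ ($\sigma(\mathrm{root})=\mathrm{root}$, $\sigma(e)=t(p(e))$ for $e\in T_2$) brings every edge to the root. A subtree of $\mathsf T$ is a tree with a morphism into $\mathsf T$ whose components are inclusions. For a tree $\mathsf T$, $\overline{\mathsf T}$ is the polynomial monad $T_0\leftarrow\mathrm{sub}'(\mathsf T)\to\mathrm{sub}(\mathsf T)\to T_0$, where $\mathrm{sub}(\mathsf T)$ is the set of subtrees, $\mathrm{sub}'(\mathsf T)$ the set of subtrees with a marked leaf, the maps return the marked leaf, forget the mark, and return the root; multiplication is grafting of subtrees and the unit sends an edge to the trivial subtree on it (this is the free monad on $\mathsf T$). $\mathbf{Tree}$ is the category whose objects are trees and whose morphisms $\mathsf S\to\mathsf T$ are monad morphisms $\overline{\mathsf S}\to\overline{\mathsf T}$ (morphisms of polynomial endofunctors respecting the monad structures). *)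

theory Defs
  imports "HOL-Library.FuncSet"
begin

text \<open>A polynomial endofunctor  P0 <-s- P2 -p-> P1 -t-> P0, with carriers given as
  sets inside ambient types: pc0 = P0 (colours/edges), pc1 = P1 (operations),
  pc2 = P2 (inputs).\<close>

record ('e, 'o, 'i) poly =
  pc0 :: "'e set"
  pc1 :: "'o set"
  pc2 :: "'i set"
  ps  :: "'i \<Rightarrow> 'e"
  pp  :: "'i \<Rightarrow> 'o"
  pt  :: "'o \<Rightarrow> 'e"

definition fibre :: "('e, 'o, 'i, 'z) poly_scheme \<Rightarrow> 'o \<Rightarrow> 'i set" where
  "fibre P b = {x \<in> pc2 P. pp P x = b}"

definition is_poly :: "('e, 'o, 'i, 'z) poly_scheme \<Rightarrow> bool" where
  "is_poly P \<longleftrightarrow> ps P \<in> pc2 P \<rightarrow> pc0 P \<and> pp P \<in> pc2 P \<rightarrow> pc1 P \<and> pt P \<in> pc1 P \<rightarrow> pc0 P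
     \<and> (\<forall>b \<in> pc1 P. finite (fibre P b))"

text \<open>Morphisms in PolyEnd: triples of maps commuting with s, p, t whose middle square
  (P2 -> Q2 over P1 -> Q1) is a pullback.\<close>

definition poly_morphism ::
  "('e, 'o, 'i, 'z) poly_scheme \<Rightarrow> ('f, 'q, 'j, 'w) poly_scheme \<Rightarrow>
   ('e \<Rightarrow> 'f) \<Rightarrow> ('o \<Rightarrow> 'q) \<Rightarrow> ('i \<Rightarrow> 'j) \<Rightarrow> bool" where
  "poly_morphism P Q F0 F1 F2 \<longleftrightarrow>
     F0 \<in> pc0 P \<rightarrow> pc0 Q \<and> F1 \<in> pc1 P \<rightarrow> pc1 Q \<and> F2 \<in> pc2 P \<rightarrow> pc2 Q
   \<and> (\<forall>x \<in> pc2 P. ps Q (F2 x) = F0 (ps P x))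
   \<and> (\<forall>x \<in> pc2 P. pp Q (F2 x) = F1 (pp P x))
   \<and> (\<forall>b \<in> pc1 P. pt Q (F1 b) = F0 (pt P b))
   \<and> bij_betw (\<lambda>x. (pp P x, F2 x)) (pc2 P)
       {(b, y). b \<in> pc1 P \<and> y \<in> pc2 Q \<and> F1 b = pp Q y}"

text \<open>The composite P o P: operations are pairs (b, d) with d assigning to each input
  x of b an operation d x with t (d x) = s x; inputs are ((b,d), x, x') with x an input of b
  and x' an input of d x.\<close>

definition comp1 :: "('e, 'o, 'i, 'z) poly_scheme \<Rightarrow> ('o \<times> ('i \<Rightarrow> 'o)) set" where
  "comp1 P = {(b, d). b \<in> pc1 P \<and> d \<in> extensional (fibre P b)
      \<and> (\<forall>x \<in> fibre P b. d x \<in> pc1 P \<and> pt P (d x) = ps P x)}"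

definition comp2 :: "('e, 'o, 'i, 'z) poly_scheme \<Rightarrow> (('o \<times> ('i \<Rightarrow> 'o)) \<times> 'i \<times> 'i) set" where
  "comp2 P = {((b, d), x, x'). (b, d) \<in> comp1 P \<and> x \<in> fibre P b \<and> x' \<in> fibre P (d x)}"

text \<open>A polynomial endofunctor together with unit (components eta1 : P0 -> P1,
  eta2 : P0 -> P2) and multiplication (components mu1 : (PoP)_1 -> P1,
  mu2 : (PoP)_2 -> P2).\<close>

record ('e, 'o, 'i) pmonad =
  pm_poly :: "('e, 'o, 'i) poly"
  eta1 :: "'e \<Rightarrow> 'o"
  eta2 :: "'e \<Rightarrow> 'i"
  mu1 :: "'o \<times> ('i \<Rightarrow> 'o) \<Rightarrow> 'o"
  mu2 :: "('o \<times> ('i \<Rightarrow> 'o)) \<times> 'i \<times> 'i \<Rightarrow> 'i"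

text \<open>Monad morphism: a morphism of polynomial endofunctors compatible with units and
  with multiplications (the latter via the horizontal composite F o F, which sends
  (b,d) to (F1 b, d') where d' (F2 x) = F1 (d x)).\<close>

definition monad_morphism ::
  "('e, 'o, 'i) pmonad \<Rightarrow> ('f, 'q, 'j) pmonad \<Rightarrow>
   ('e \<Rightarrow> 'f) \<Rightarrow> ('o \<Rightarrow> 'q) \<Rightarrow> ('i \<Rightarrow> 'j) \<Rightarrow> bool" where
  "monad_morphism M N F0 F1 F2 \<longleftrightarrow>
     poly_morphism (pm_poly M) (pm_poly N) F0 F1 F2
   \<and> (\<forall>a \<in> pc0 (pm_poly M). F1 (eta1 M a) = eta1 N (F0 a) \<and> F2 (eta2 M a) = eta2 N (F0 a))
   \<and> (\<forall>(b, d) \<in> comp1 (pm_poly M). \<forall>d'.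
        (d' \<in> extensional (fibre (pm_poly N) (F1 b))
          \<and> (\<forall>x \<in> fibre (pm_poly M) b. d' (F2 x) = F1 (d x)))
        \<longrightarrow> F1 (mu1 M (b, d)) = mu1 N (F1 b, d')
          \<and> (\<forall>x \<in> fibre (pm_poly M) b. \<forall>x' \<in> fibre (pm_poly M) (d x).
               F2 (mu2 M ((b, d), x, x')) = mu2 N ((F1 b, d'), F2 x, F2 x')))"

definition tree_sigma :: "('e, 'o, 'i, 'z) poly_scheme \<Rightarrow> 'e \<Rightarrow> 'e" where
  "tree_sigma T a = (if a \<in> ps T ` pc2 T then pt T (pp T (the_inv_into (pc2 T) (ps T) a)) else a)"

definition is_tree :: "('e, 'o, 'i, 'z) poly_scheme \<Rightarrow> bool" where
  "is_tree T \<longleftrightarrow> is_poly T \<and> finite (pc0 T) \<and> finite (pc1 T) \<and> finite (pc2 T)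
     \<and> inj_on (pt T) (pc1 T) \<and> inj_on (ps T) (pc2 T)
     \<and> (\<exists>r. pc0 T - ps T ` pc2 T = {r}
            \<and> (\<forall>a \<in> pc0 T. \<exists>k. (tree_sigma T ^^ k) a = r))"

definition tree_root :: "('e, 'o, 'i, 'z) poly_scheme \<Rightarrow> 'e" where
  "tree_root T = (THE r. r \<in> pc0 T - ps T ` pc2 T)"

text \<open>A subtree is given by its triple of carriers (subsets of those of T), with the
  structure maps of T restricted; it must be a tree and the componentwise inclusion must be
  a morphism of polynomial endofunctors.\<close>

type_synonym ('e, 'o, 'i) subtr = "'e set \<times> 'o set \<times> 'i set"

definition subpoly :: "('e, 'o, 'i) poly \<Rightarrow> ('e, 'o, 'i) subtr \<Rightarrow> ('e, 'o, 'i) poly" where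
  "subpoly T X = T\<lparr>pc0 := fst X, pc1 := fst (snd X), pc2 := snd (snd X)\<rparr>"

definition is_subtree :: "('e, 'o, 'i) poly \<Rightarrow> ('e, 'o, 'i) subtr \<Rightarrow> bool" where
  "is_subtree T X \<longleftrightarrow> fst X \<subseteq> pc0 T \<and> fst (snd X) \<subseteq> pc1 T \<and> snd (snd X) \<subseteq> pc2 T
     \<and> is_tree (subpoly T X) \<and> poly_morphism (subpoly T X) T id id id"

definition sub :: "('e, 'o, 'i) poly \<Rightarrow> ('e, 'o, 'i) subtr set" where
  "sub T = {X. is_subtree T X}"

definition leaves :: "('e, 'o, 'i, 'z) poly_scheme \<Rightarrow> 'e set" where
  "leaves T = pc0 T - pt T ` pc1 T"

definition sub' :: "('e, 'o, 'i) poly \<Rightarrow> (('e, 'o, 'i) subtr \<times> 'e) set" where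
  "sub' T = {(X, l). X \<in> sub T \<and> l \<in> leaves (subpoly T X)}"

definition tree_bar_poly ::
  "('e, 'o, 'i) poly \<Rightarrow> ('e, ('e, 'o, 'i) subtr, ('e, 'o, 'i) subtr \<times> 'e) poly" where
  "tree_bar_poly T = \<lparr>pc0 = pc0 T, pc1 = sub T, pc2 = sub' T,
     ps = snd, pp = fst, pt = (\<lambda>X. tree_root (subpoly T X))\<rparr>"

definition trivial_subtree :: "'e \<Rightarrow> ('e, 'o, 'i) subtr" where
  "trivial_subtree a = ({a}, {}, {})"

text \<open>Grafting: the subtree X with, for each leaf l, the subtree d (X, l) (rooted at l)
  grafted onto l.\<close>

definition graft ::
  "('e, 'o, 'i) poly \<Rightarrow> ('e, 'o, 'i) subtr \<Rightarrow> (('e, 'o, 'i) subtr \<times> 'e \<Rightarrow> ('e, 'o, 'i) subtr)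
   \<Rightarrow> ('e, 'o, 'i) subtr" where
  "graft T X d =
     (fst X \<union> (\<Union>l \<in> leaves (subpoly T X). fst (d (X, l))),
      fst (snd X) \<union> (\<Union>l \<in> leaves (subpoly T X). fst (snd (d (X, l)))),
      snd (snd X) \<union> (\<Union>l \<in> leaves (subpoly T X). snd (snd (d (X, l)))))"

text \<open>The free monad on the tree T (the polynomial monad T-bar).\<close>

definition tree_bar ::
  "('e, 'o, 'i) poly \<Rightarrow> ('e, ('e, 'o, 'i) subtr, ('e, 'o, 'i) subtr \<times> 'e) pmonad" where
  "tree_bar T = \<lparr>pm_poly = tree_bar_poly T,
     eta1 = (\<lambda>a. trivial_subtree a),
     eta2 = (\<lambda>a. (trivial_subtree a, a)),
     mu1 = (\<lambda>(X, d). graft T X d),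
     mu2 = (\<lambda>((X, d), x, x'). (graft T X d, snd x'))\<rparr>"

end

theory Submission
  imports Defs
begin

text \<open>
  Inside a tree T, every subtree is determined by its root edge together with
  its set of leaves (lemma sub_unique): walking from any edge of the subtree towards the
  root of T along the parent map tree_sigma, one stays inside the subtree until its root,
  so the subtree is recovered as the set of vertices between the root and the leaves.

  A morphism (F0, F1, F2) of polynomial endofunctors between the free monads on S and T
  commutes with the target map, so F1 preserves roots of subtrees, and its middle square
  is a pullback, so F0 maps the leaves of a subtree X onto the leaves of F1 X.
  Units (trivial subtrees) and multiplications (grafts) in the free monad are
  subtrees whose root and leaves are determined by the data (lemmas trivial_sub and
  graft_props), so by uniqueness F1 and F2 automatically commute with them.
\<close>

subsection \<open>The root and the parent map of a tree\<close>

lemma tree_root_eq: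
  assumes "is_tree T" shows "pc0 T - ps T ` pc2 T = {tree_root T}"
proof -
  from assms obtain r where r: "pc0 T - ps T ` pc2 T = {r}" unfolding is_tree_def by blast
  hence "tree_root T = r" unfolding tree_root_def by auto
  with r show ?thesis by simp
qed

lemma tree_root_in: "is_tree T \<Longrightarrow> tree_root T \<in> pc0 T"
  using tree_root_eq[of T] by blast

lemma tree_root_notin: "is_tree T \<Longrightarrow> tree_root T \<notin> ps T ` pc2 T"
  using tree_root_eq[of T] by blast

lemma tree_nonroot: "is_tree T \<Longrightarrow> a \<in> pc0 T \<Longrightarrow> a \<noteq> tree_root T \<Longrightarrow> a \<in> ps T ` pc2 T"
  using tree_root_eq[of T] by blast

lemma tree_ps: "is_tree T \<Longrightarrow> x \<in> pc2 T \<Longrightarrow> ps T x \<in> pc0 T"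
  unfolding is_tree_def is_poly_def by auto

lemma tree_pp: "is_tree T \<Longrightarrow> x \<in> pc2 T \<Longrightarrow> pp T x \<in> pc1 T"
  unfolding is_tree_def is_poly_def by auto

lemma tree_pt: "is_tree T \<Longrightarrow> v \<in> pc1 T \<Longrightarrow> pt T v \<in> pc0 T"
  unfolding is_tree_def is_poly_def by auto

lemma tree_inj_ps: "is_tree T \<Longrightarrow> inj_on (ps T) (pc2 T)"
  unfolding is_tree_def by auto

lemma tree_inj_pt: "is_tree T \<Longrightarrow> inj_on (pt T) (pc1 T)"
  unfolding is_tree_def by auto

lemma sigma_ps:
  assumes t: "is_tree T" and x: "x \<in> pc2 T"
  shows "tree_sigma T (ps T x) = pt T (pp T x)"
  unfolding tree_sigma_def using the_inv_into_f_f[OF tree_inj_ps[OF t] x] x by auto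

lemma sigma_pow_root: "is_tree T \<Longrightarrow> (tree_sigma T ^^ k) (tree_root T) = tree_root T"
  by (induction k) (auto simp: tree_sigma_def tree_root_notin)

lemma tree_reach:
  assumes t: "is_tree T" and a: "a \<in> pc0 T"
  shows "\<exists>k. (tree_sigma T ^^ k) a = tree_root T"
proof -
  from t obtain r where r: "pc0 T - ps T ` pc2 T = {r}" "\<forall>a \<in> pc0 T. \<exists>k. (tree_sigma T ^^ k) a = r"
    unfolding is_tree_def by blast
  with tree_root_eq[OF t] a show ?thesis by auto
qed

text \<open>The root is the only periodic edge: every orbit of the parent map ends in the root.\<close>

lemma sigma_periodic_root:
  assumes t: "is_tree T" and a: "a \<in> pc0 T"
    and c: "0 < c" and per: "(tree_sigma T ^^ c) a = a"
  shows "a = tree_root T"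
proof -
  obtain k where k: "(tree_sigma T ^^ k) a = tree_root T" using tree_reach[OF t a] by blast
  have split: "c * k = (c * k - k) + k" using c by (cases c) auto
  have "a = (tree_sigma T ^^ (c * k)) a" using funpow_mod_eq[OF per, of "c * k"] by simp
  also have "\<dots> = (tree_sigma T ^^ (c * k - k)) (tree_root T)"
    using k split by (metis comp_apply funpow_add)
  also have "\<dots> = tree_root T" by (rule sigma_pow_root[OF t])
  finally show ?thesis .
qed

lemma sigma_antisym:
  assumes t: "is_tree T" and a: "a \<in> pc0 T"
    and ab: "(tree_sigma T ^^ i) a = b" and ba: "(tree_sigma T ^^ j) b = a"
  shows "a = b"
proof (cases "i = 0")
  case True
  with ab show ?thesis by simp
next
  case False
  have "(tree_sigma T ^^ (j + i)) a = a" using ab ba by (simp add: funpow_add)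
  then have "a = tree_root T" using sigma_periodic_root[OF t a, of "j + i"] False by simp
  with ab show ?thesis using sigma_pow_root[OF t] by simp
qed

lemma funpow_path_extend:
  assumes "(f ^^ m) e = x" and "(f ^^ n) e = y" and "m \<le> n"
  shows "(f ^^ (n - m)) x = y"
  using assms by (metis comp_apply funpow_add le_add_diff_inverse2)

lemma funpow_reach_transfer:
  assumes agree: "\<forall>a \<in> A - {r}. f a = g a \<and> f a \<in> A"
  shows "a \<in> A \<Longrightarrow> (f ^^ k) a = r \<Longrightarrow> \<exists>j. (g ^^ j) a = r"
proof (induction k arbitrary: a)
  case 0
  then show ?case by (metis funpow_0)
next
  case (Suc k)
  show ?case
  proof (cases "a = r")
    case True
    then show ?thesis by (metis funpow_0)
  next
    case False
    have fa: "f a = g a" "f a \<in> A" using agree Suc.prems(1) False by blast+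
    have "(f ^^ k) (f a) = r" using Suc.prems by (simp add: funpow_swap1)
    then obtain j where "(g ^^ j) (g a) = r" using Suc.IH[OF fa(2)] fa(1) by auto
    hence "(g ^^ Suc j) a = r" by (simp add: funpow_swap1)
    then show ?thesis by blast
  qed
qed

subsection \<open>Subtrees\<close>

lemma subpoly_simps [simp]:
  "pc0 (subpoly T (A, B, C)) = A" "pc1 (subpoly T (A, B, C)) = B" "pc2 (subpoly T (A, B, C)) = C"
  "ps (subpoly T X) = ps T" "pp (subpoly T X) = pp T" "pt (subpoly T X) = pt T"
  by (simp_all add: subpoly_def)

lemma leaves_sub [simp]: "leaves (subpoly T (A, B, C)) = A - pt T ` B"
  by (simp add: leaves_def)

text \<open>The pullback condition on the inclusion of a subtree says exactly that every input
  of one of its vertices belongs to the subtree.\<close>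

lemma is_subtree_iff:
  "is_subtree T (A, B, C) \<longleftrightarrow> A \<subseteq> pc0 T \<and> B \<subseteq> pc1 T \<and> C \<subseteq> pc2 T
     \<and> is_tree (subpoly T (A, B, C)) \<and> (\<forall>y \<in> pc2 T. pp T y \<in> B \<longrightarrow> y \<in> C)"
    (is "?sub \<longleftrightarrow> ?rhs")
proof
  assume s: ?sub
  hence bij: "bij_betw (\<lambda>x. (pp T x, x)) C {(b, y). b \<in> B \<and> y \<in> pc2 T \<and> b = pp T y}"
    unfolding is_subtree_def poly_morphism_def by simp
  have "y \<in> C" if "y \<in> pc2 T" "pp T y \<in> B" for y
  proof -
    have "(pp T y, y) \<in> (\<lambda>x. (pp T x, x)) ` C" using that bij_betw_imp_surj_on[OF bij] by auto
    thus "y \<in> C" by auto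
  qed
  with s show ?rhs unfolding is_subtree_def by simp
next
  assume h: ?rhs
  have pp: "\<And>x. x \<in> C \<Longrightarrow> pp T x \<in> B" using tree_pp[of "subpoly T (A, B, C)"] h by fastforce
  have "bij_betw (\<lambda>x. (pp T x, x)) C {(b, y). b \<in> B \<and> y \<in> pc2 T \<and> b = pp T y}"
    unfolding bij_betw_def using h pp by (auto intro: inj_onI)
  with h show ?sub unfolding is_subtree_def poly_morphism_def by auto
qed

lemma sub_sigma:
  assumes "C \<subseteq> pc2 T" "inj_on (ps T) (pc2 T)" "a \<in> ps T ` C"
  shows "tree_sigma (subpoly T (A, B, C)) a = tree_sigma T a"
proof -
  obtain x where x: "x \<in> C" "a = ps T x" using assms(3) by blast
  have "inj_on (ps T) C" using assms(1,2) inj_on_subset by blast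
  hence "the_inv_into C (ps T) a = x" using x the_inv_into_f_f by metis
  moreover have "the_inv_into (pc2 T) (ps T) a = x"
    using x assms(1,2) the_inv_into_f_f by (metis subsetD)
  ultimately show ?thesis unfolding tree_sigma_def using x assms(1) by auto
qed

context
  fixes T :: "('e, 'o, 'i) poly" and A B C
  assumes t: "is_tree T" and s: "is_subtree T (A, B, C)"
begin

lemma sub_props:
  "A \<subseteq> pc0 T" "B \<subseteq> pc1 T" "C \<subseteq> pc2 T" "is_tree (subpoly T (A, B, C))"
  "\<And>y. y \<in> pc2 T \<Longrightarrow> pp T y \<in> B \<Longrightarrow> y \<in> C"
  using s unfolding is_subtree_iff by auto

lemma sub_ps: "x \<in> C \<Longrightarrow> ps T x \<in> A"
  using tree_ps[OF sub_props(4)] by simp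

lemma sub_pp: "x \<in> C \<Longrightarrow> pp T x \<in> B"
  using tree_pp[OF sub_props(4)] by simp

lemma sub_pt: "v \<in> B \<Longrightarrow> pt T v \<in> A"
  using tree_pt[OF sub_props(4)] by simp

lemma sub_root: "tree_root (subpoly T (A, B, C)) \<in> A"
  using tree_root_in[OF sub_props(4)] by simp

lemma sub_step:
  assumes a: "a \<in> A" "a \<noteq> tree_root (subpoly T (A, B, C))"
  shows "tree_sigma T a \<in> A \<and> tree_sigma T a \<in> pt T ` B \<and> a \<in> ps T ` C"
proof -
  have "a \<in> ps T ` C" using tree_nonroot[OF sub_props(4)] a by simp
  then obtain x where x: "x \<in> C" "a = ps T x" by blast
  have "tree_sigma T a = pt T (pp T x)" using sigma_ps[OF t] x sub_props(3) by auto
  thus ?thesis using sub_pp sub_pt x by auto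
qed

lemma sub_reach_within:
  assumes CD: "C \<subseteq> D" and D: "D \<subseteq> pc2 T" and a: "a \<in> A"
  shows "\<exists>k. (tree_sigma (subpoly T (A', B', D)) ^^ k) a = tree_root (subpoly T (A, B, C))"
proof -
  let ?r = "tree_root (subpoly T (A, B, C))"
  obtain k where k: "(tree_sigma (subpoly T (A, B, C)) ^^ k) a = ?r"
    using tree_reach[OF sub_props(4)] a by auto
  have agree: "\<forall>b \<in> A - {?r}. tree_sigma (subpoly T (A, B, C)) b = tree_sigma (subpoly T (A', B', D)) b
                   \<and> tree_sigma (subpoly T (A, B, C)) b \<in> A"
  proof
    fix b assume b: "b \<in> A - {?r}"
    hence step: "tree_sigma T b \<in> A" "b \<in> ps T ` C" using sub_step by auto
    have "tree_sigma (subpoly T (A, B, C)) b = tree_sigma T b"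
      using sub_sigma[OF sub_props(3) tree_inj_ps[OF t] step(2)] .
    moreover have "tree_sigma (subpoly T (A', B', D)) b = tree_sigma T b"
      using sub_sigma[OF D tree_inj_ps[OF t]] step(2) CD by blast
    ultimately show "tree_sigma (subpoly T (A, B, C)) b = tree_sigma (subpoly T (A', B', D)) b
                   \<and> tree_sigma (subpoly T (A, B, C)) b \<in> A" using step(1) by simp
  qed
  show ?thesis using funpow_reach_transfer[OF agree a k] .
qed

lemma sub_reach: "a \<in> A \<Longrightarrow> \<exists>k. (tree_sigma T ^^ k) a = tree_root (subpoly T (A, B, C))"
  using sub_reach_within[of "pc2 T" a "pc0 T" "pc1 T"] sub_props(3)
  by (simp add: subpoly_def)

text \<open>A leaf of the subtree lying on the path from an edge a of the subtree to the root of
  T must be a itself: the path leaves a only through outputs of vertices of the subtree.\<close>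

lemma sub_leaf_on_path:
  assumes "a \<in> A" and b: "b \<in> A - pt T ` B" and "(tree_sigma T ^^ j) a = b"
  shows "a = b"
  using assms(1,3)
proof (induction j arbitrary: a)
  case 0
  then show ?case by simp
next
  case (Suc j)
  show ?case
  proof (cases "a = tree_root (subpoly T (A, B, C))")
    case True
    obtain k where "(tree_sigma T ^^ k) b = a" using sub_reach b True by blast
    then show ?thesis using sigma_antisym[OF t _ Suc.prems(2)] Suc.prems(1) sub_props(1) by blast
  next
    case False
    hence up: "tree_sigma T a \<in> A" "tree_sigma T a \<in> pt T ` B"
      using sub_step Suc.prems(1) by auto
    have "(tree_sigma T ^^ j) (tree_sigma T a) = b" using Suc.prems(2) by (simp add: funpow_swap1)
    hence "tree_sigma T a = b" by (rule Suc.IH[OF up(1)])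
    with up(2) b show ?thesis by blast
  qed
qed

end

text \<open>An edge of the first is in the second by induction on its distance to the
  common root; its parent vertex is not a leaf, hence a vertex of the second subtree.\<close>

lemma sub_incl:
  assumes t: "is_tree T" and s1: "is_subtree T (A, B, C)" and s2: "is_subtree T (A', B', C')"
    and r: "tree_root (subpoly T (A, B, C)) = tree_root (subpoly T (A', B', C'))"
    and l: "A - pt T ` B = A' - pt T ` B'"
  shows "A \<subseteq> A' \<and> B \<subseteq> B' \<and> C \<subseteq> C'"
proof -
  let ?r = "tree_root (subpoly T (A, B, C))"
  have vertex: "v \<in> B'" if v: "v \<in> B" "pt T v \<in> A'" for v
  proof -
    have "pt T v \<notin> A' - pt T ` B'" using l v(1) by auto
    with v(2) obtain w where w: "w \<in> B'" "pt T w = pt T v" by auto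
    have "w = v"
      using inj_onD[OF tree_inj_pt[OF t] w(2)] w(1) v(1) sub_props(2)[OF t s1] sub_props(2)[OF t s2]
      by auto
    with w show "v \<in> B'" by simp
  qed
  have edge: "a \<in> A'" if "a \<in> A" "(tree_sigma T ^^ k) a = ?r" for a k
    using that
  proof (induction k arbitrary: a)
    case 0
    then show ?case using r sub_root[OF t s2] by simp
  next
    case (Suc k)
    show ?case
    proof (cases "a = ?r")
      case True
      then show ?thesis using r sub_root[OF t s2] by simp
    next
      case False
      then obtain x where x: "x \<in> C" "a = ps T x" using sub_step[OF t s1 Suc.prems(1)] by blast
      have xT: "x \<in> pc2 T" using x sub_props(3)[OF t s1] by auto
      have "(tree_sigma T ^^ k) (tree_sigma T a) = ?r" using Suc.prems(2) by (simp add: funpow_swap1)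
      hence "tree_sigma T a \<in> A'" using Suc.IH sub_step[OF t s1 Suc.prems(1) False] by blast
      hence "pp T x \<in> B'" using vertex sub_pp[OF t s1 x(1)] sigma_ps[OF t xT] x(2) by simp
      hence "x \<in> C'" using sub_props(5)[OF t s2 xT] by simp
      thus ?thesis using x sub_ps[OF t s2] by simp
    qed
  qed
  have A: "A \<subseteq> A'" using edge sub_reach[OF t s1] by blast
  have B: "B \<subseteq> B'" using vertex A sub_pt[OF t s1] by blast
  have C: "C \<subseteq> C'" using B sub_pp[OF t s1] sub_props(5)[OF t s2] sub_props(3)[OF t s1] by blast
  show ?thesis using A B C by blast
qed

lemma sub_unique:
  assumes t: "is_tree T" and s1: "is_subtree T X" and s2: "is_subtree T Y"
    and r: "tree_root (subpoly T X) = tree_root (subpoly T Y)"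
    and l: "leaves (subpoly T X) = leaves (subpoly T Y)"
  shows "X = Y"
proof -
  obtain A B C where X: "X = (A, B, C)" by (cases X) auto
  obtain A' B' C' where Y: "Y = (A', B', C')" by (cases Y) auto
  have l': "A - pt T ` B = A' - pt T ` B'" using l unfolding X Y by simp
  show ?thesis
    using sub_incl[OF t s1[unfolded X] s2[unfolded Y] r[unfolded X Y] l']
      sub_incl[OF t s2[unfolded Y] s1[unfolded X] r[unfolded X Y, symmetric] l'[symmetric]] X Y
    by auto
qed

subsection \<open>Units and multiplication of the free monad on a tree\<close>

lemma trivial_sub:
  assumes t: "is_tree T" and a: "a \<in> pc0 T"
  shows "is_subtree T (trivial_subtree a)"
    and "tree_root (subpoly T (trivial_subtree a)) = a"
    and "leaves (subpoly T (trivial_subtree a)) = {a}"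
proof -
  have tr: "is_tree (subpoly T ({a}, {}, {}))"
    unfolding is_tree_def is_poly_def fibre_def by (auto intro!: exI[of _ 0])
  show "is_subtree T (trivial_subtree a)"
    unfolding trivial_subtree_def is_subtree_iff using tr a by auto
  show "tree_root (subpoly T (trivial_subtree a)) = a"
    using tree_root_eq[OF tr] unfolding trivial_subtree_def by auto
  show "leaves (subpoly T (trivial_subtree a)) = {a}"
    unfolding trivial_subtree_def by simp
qed

context
  fixes T :: "('e, 'o, 'i) poly" and A B C and DA DB DC
  assumes t: "is_tree T" and s: "is_subtree T (A, B, C)"
    and sd: "\<And>l. l \<in> A - pt T ` B \<Longrightarrow> is_subtree T (DA l, DB l, DC l)"
    and rd: "\<And>l. l \<in> A - pt T ` B \<Longrightarrow> tree_root (subpoly T (DA l, DB l, DC l)) = l"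
begin

abbreviation "LL \<equiv> A - pt T ` B"
abbreviation "GA \<equiv> A \<union> (\<Union>l \<in> LL. DA l)"
abbreviation "GB \<equiv> B \<union> (\<Union>l \<in> LL. DB l)"
abbreviation "GC \<equiv> C \<union> (\<Union>l \<in> LL. DC l)"
abbreviation "G \<equiv> subpoly T (GA, GB, GC)"

lemma graft_base_meets_branch:
  assumes l: "l \<in> LL" and e: "e \<in> A" "e \<in> DA l"
  shows "e = l"
proof -
  obtain k where "(tree_sigma T ^^ k) e = l" using sub_reach[OF t sd[OF l] e(2)] rd[OF l] by auto
  then show ?thesis using sub_leaf_on_path[OF t s e(1) l] by blast
qed

text \<open>Subtrees grafted at different leaves are disjoint: both leaves would lie on the path
  from a common edge to the root, so one would lie on the path from the other.\<close>

lemma graft_branches_disjoint: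
  assumes l: "l \<in> LL" and l': "l' \<in> LL" and e: "e \<in> DA l" "e \<in> DA l'"
  shows "l = l'"
proof -
  obtain i where i: "(tree_sigma T ^^ i) e = l" using sub_reach[OF t sd[OF l] e(1)] rd[OF l] by auto
  obtain j where j: "(tree_sigma T ^^ j) e = l'" using sub_reach[OF t sd[OF l'] e(2)] rd[OF l'] by auto
  show ?thesis
  proof (cases "i \<le> j")
    case True
    then show ?thesis
      using sub_leaf_on_path[OF t s _ l' funpow_path_extend[OF i j]] l by blast
  next
    case False
    then show ?thesis
      using sub_leaf_on_path[OF t s _ l funpow_path_extend[OF j i]] l' by fastforce
  qed
qed

lemma graft_incl: "GA \<subseteq> pc0 T" "GB \<subseteq> pc1 T" "GC \<subseteq> pc2 T"
  using sub_props(1-3)[OF t s] sub_props(1-3)[OF t sd] by blast+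

lemma graft_poly: "is_poly G"
proof -
  have fin: "finite GC" using graft_incl(3) t unfolding is_tree_def by (meson finite_subset)
  have "finite (fibre G b)" for b
    unfolding fibre_def by (rule finite_subset[OF _ fin]) auto
  moreover have "ps G \<in> pc2 G \<rightarrow> pc0 G"
    using sub_ps[OF t s] sub_ps[OF t sd] by (simp add: Pi_def) blast
  moreover have "pp G \<in> pc2 G \<rightarrow> pc1 G"
    using sub_pp[OF t s] sub_pp[OF t sd] by (simp add: Pi_def) blast
  moreover have "pt G \<in> pc1 G \<rightarrow> pc0 G"
    using sub_pt[OF t s] sub_pt[OF t sd] by (simp add: Pi_def) blast
  ultimately show ?thesis unfolding is_poly_def by blast
qed

lemma graft_rootset: "GA - ps T ` GC = {tree_root (subpoly T (A, B, C))}"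
proof
  let ?r = "tree_root (subpoly T (A, B, C))"
  show "GA - ps T ` GC \<subseteq> {?r}"
  proof
    fix e assume e: "e \<in> GA - ps T ` GC"
    show "e \<in> {?r}"
    proof (cases "e \<in> A")
      case True
      then show ?thesis using e tree_nonroot[OF sub_props(4)[OF t s]] by auto
    next
      case False
      then obtain l where l: "l \<in> LL" "e \<in> DA l" using e by auto
      have "e = l" using tree_nonroot[OF sub_props(4)[OF t sd[OF l(1)]]] rd[OF l(1)] l e by auto
      then show ?thesis using False l by auto
    qed
  qed
  have "?r \<notin> ps T ` GC"
  proof
    assume "?r \<in> ps T ` GC"
    then obtain y where y: "y \<in> GC" "?r = ps T y" by blast
    show False
    proof (cases "y \<in> C")
      case True
      then show False using y tree_root_notin[OF sub_props(4)[OF t s]] by auto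
    next
      case False
      then obtain l where l: "l \<in> LL" "y \<in> DC l" using y by auto
      have "?r \<in> DA l" using sub_ps[OF t sd[OF l(1)] l(2)] y by simp
      hence "?r = l" using graft_base_meets_branch[OF l(1) sub_root[OF t s]] by simp
      thus False using tree_root_notin[OF sub_props(4)[OF t sd[OF l(1)]]] rd[OF l(1)] l y by auto
    qed
  qed
  thus "{?r} \<subseteq> GA - ps T ` GC" using sub_root[OF t s] by auto
qed

text \<open>Every edge of the graft reaches the root of the base: first the root of its own
  branch (a leaf of the base), then the root of the base.\<close>

lemma graft_reach:
  assumes a: "a \<in> GA"
  shows "\<exists>k. (tree_sigma G ^^ k) a = tree_root (subpoly T (A, B, C))"
proof (cases "a \<in> A")
  case True
  then show ?thesis using sub_reach_within[OF t s _ graft_incl(3)] by blast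
next
  case False
  then obtain l where l: "l \<in> LL" "a \<in> DA l" using a by blast
  have "DC l \<subseteq> GC" using l(1) by blast
  then obtain j where j: "(tree_sigma G ^^ j) a = l"
    using sub_reach_within[OF t sd[OF l(1)] _ graft_incl(3) l(2), where A' = GA and B' = GB]
      rd[OF l(1)] by auto
  obtain k where k: "(tree_sigma G ^^ k) l = tree_root (subpoly T (A, B, C))"
    using sub_reach_within[OF t s _ graft_incl(3)] l(1) by blast
  have "(tree_sigma G ^^ (k + j)) a = tree_root (subpoly T (A, B, C))"
    using j k by (simp add: funpow_add)
  then show ?thesis by blast
qed

lemma graft_subtree: "is_subtree T (GA, GB, GC)"
proof -
  let ?r = "tree_root (subpoly T (A, B, C))"
  have fin: "finite GA" "finite GB" "finite GC"
    using graft_incl t unfolding is_tree_def by (meson finite_subset)+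
  have inj: "inj_on (pt T) GB" "inj_on (ps T) GC"
    using inj_on_subset[OF tree_inj_pt[OF t] graft_incl(2)]
      inj_on_subset[OF tree_inj_ps[OF t] graft_incl(3)] .
  have tree: "is_tree G"
    unfolding is_tree_def
  proof (intro conjI exI[of _ ?r])
    show "\<forall>a \<in> pc0 G. \<exists>k. (tree_sigma G ^^ k) a = ?r" using graft_reach by simp
  qed (use fin graft_poly inj graft_rootset in simp_all)
  have closed: "y \<in> GC" if y: "y \<in> pc2 T" "pp T y \<in> GB" for y
  proof (cases "pp T y \<in> B")
    case True
    then show ?thesis using sub_props(5)[OF t s y(1)] by blast
  next
    case False
    then obtain l where l: "l \<in> LL" "pp T y \<in> DB l" using y(2) by blast
    show ?thesis using sub_props(5)[OF t sd[OF l(1)] y(1) l(2)] l(1) by blast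
  qed
  show ?thesis unfolding is_subtree_iff using graft_incl tree closed by simp
qed

lemma graft_root: "tree_root G = tree_root (subpoly T (A, B, C))"
  using tree_root_eq[OF sub_props(4)[OF t graft_subtree]] graft_rootset by simp

text \<open>A leaf of a grafted subtree is not the output of any vertex of the graft: such a vertex
  would have to lie in the base (forcing the leaf to be the base leaf l, which is not an
  output of the base) or in another grafted subtree (impossible by disjointness).\<close>

lemma graft_branch_leaf:
  assumes l: "l \<in> LL" and e: "e \<in> DA l" "e \<notin> pt T ` DB l"
  shows "e \<notin> pt T ` GB"
proof
  assume "e \<in> pt T ` GB"
  then obtain v where v: "v \<in> GB" "e = pt T v" by blast
  show False
  proof (cases "v \<in> B")
    case True
    hence "e = l" using graft_base_meets_branch[OF l _ e(1)] sub_pt[OF t s] v(2) by simp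
    with True v(2) l show False by auto
  next
    case False
    then obtain l' where l': "l' \<in> LL" "v \<in> DB l'" using v(1) by blast
    hence "l = l'" using graft_branches_disjoint[OF l l'(1) e(1)] sub_pt[OF t sd[OF l'(1)]] v(2) by simp
    with l' v(2) e(2) show False by auto
  qed
qed

text \<open>The leaves of the graft are the leaves of the grafted subtrees; a leaf l of the base
  reappears as the root of the subtree grafted at l, and is covered there.\<close>

lemma graft_leaves: "leaves G = (\<Union>l \<in> LL. leaves (subpoly T (DA l, DB l, DC l)))"
proof -
  have "GA - pt T ` GB = (\<Union>l \<in> LL. DA l - pt T ` DB l)"
  proof
    show "GA - pt T ` GB \<subseteq> (\<Union>l \<in> LL. DA l - pt T ` DB l)"
    proof
      fix e assume e: "e \<in> GA - pt T ` GB"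
      show "e \<in> (\<Union>l \<in> LL. DA l - pt T ` DB l)"
      proof (cases "e \<in> A")
        case True
        hence l: "e \<in> LL" using e by auto
        have "e \<in> DA e" using sub_root[OF t sd[OF l]] rd[OF l] by simp
        thus ?thesis using l e by auto
      next
        case False
        then show ?thesis using e by auto
      qed
    qed
    show "(\<Union>l \<in> LL. DA l - pt T ` DB l) \<subseteq> GA - pt T ` GB"
      using graft_branch_leaf by blast
  qed
  thus ?thesis by simp
qed

end

lemma graft_props:
  assumes t: "is_tree T" and s: "is_subtree T X"
    and dd: "\<And>l. l \<in> leaves (subpoly T X) \<Longrightarrow>
               is_subtree T (d (X, l)) \<and> tree_root (subpoly T (d (X, l))) = l"
  shows "is_subtree T (graft T X d)"
    and "tree_root (subpoly T (graft T X d)) = tree_root (subpoly T X)"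
    and "leaves (subpoly T (graft T X d)) = (\<Union>l \<in> leaves (subpoly T X). leaves (subpoly T (d (X, l))))"
proof -
  obtain A B C where X: "X = (A, B, C)" by (cases X) auto
  let ?DA = "\<lambda>l. fst (d (X, l))" and ?DB = "\<lambda>l. fst (snd (d (X, l)))"
    and ?DC = "\<lambda>l. snd (snd (d (X, l)))"
  have s': "is_subtree T (A, B, C)" using s X by simp
  have sd: "is_subtree T (?DA l, ?DB l, ?DC l)"
    and rd: "tree_root (subpoly T (?DA l, ?DB l, ?DC l)) = l" if "l \<in> A - pt T ` B" for l
    using dd[of l] that X by simp_all
  have g: "graft T X d = (A \<union> (\<Union>l \<in> A - pt T ` B. ?DA l), B \<union> (\<Union>l \<in> A - pt T ` B. ?DB l),
      C \<union> (\<Union>l \<in> A - pt T ` B. ?DC l))"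
    unfolding graft_def X by simp
  show "is_subtree T (graft T X d)"
    unfolding g using graft_subtree[OF t s' sd rd] .
  show "tree_root (subpoly T (graft T X d)) = tree_root (subpoly T X)"
    unfolding g using graft_root[OF t s' sd rd] X by simp
  show "leaves (subpoly T (graft T X d)) = (\<Union>l \<in> leaves (subpoly T X). leaves (subpoly T (d (X, l))))"
    unfolding g using graft_leaves[OF t s' sd rd] X by simp
qed

lemma sub'_iff: "(X, l) \<in> sub' T \<longleftrightarrow> is_subtree T X \<and> l \<in> leaves (subpoly T X)"
  unfolding sub'_def sub_def by simp

lemma fibre_tree_bar_iff: "x \<in> fibre (tree_bar_poly T) X \<longleftrightarrow> x \<in> sub' T \<and> fst x = X"
  unfolding fibre_def tree_bar_poly_def by simp

lemma comp1_tree_bar: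
  assumes "(X, d) \<in> comp1 (tree_bar_poly T)"
  shows "is_subtree T X"
    and "l \<in> leaves (subpoly T X) \<Longrightarrow> is_subtree T (d (X, l)) \<and> tree_root (subpoly T (d (X, l))) = l"
proof -
  show X: "is_subtree T X"
    using assms unfolding comp1_def tree_bar_poly_def sub_def by simp
  assume "l \<in> leaves (subpoly T X)"
  hence "(X, l) \<in> fibre (tree_bar_poly T) X" using X by (simp add: fibre_tree_bar_iff sub'_iff)
  then show "is_subtree T (d (X, l)) \<and> tree_root (subpoly T (d (X, l))) = l"
    using assms unfolding comp1_def tree_bar_poly_def sub_def by auto
qed

subsection \<open>Endofunctor morphisms between free monads on trees\<close>

locale tree_bar_map =
  fixes S :: "('e, 'o, 'i) poly" and T :: "('f, 'q, 'j) poly"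
    and F0 :: "'e \<Rightarrow> 'f"
    and F1 :: "('e, 'o, 'i) subtr \<Rightarrow> ('f, 'q, 'j) subtr"
    and F2 :: "('e, 'o, 'i) subtr \<times> 'e \<Rightarrow> ('f, 'q, 'j) subtr \<times> 'f"
  assumes tree_S: "is_tree S" and tree_T: "is_tree T"
    and morphism: "poly_morphism (tree_bar_poly S) (tree_bar_poly T) F0 F1 F2"
begin

lemma F0_edge: "a \<in> pc0 S \<Longrightarrow> F0 a \<in> pc0 T"
  using morphism unfolding poly_morphism_def tree_bar_poly_def by auto

lemma F1_subtree: "is_subtree S X \<Longrightarrow> is_subtree T (F1 X)"
  using morphism unfolding poly_morphism_def tree_bar_poly_def sub_def by auto

lemma F1_root: "is_subtree S X \<Longrightarrow> tree_root (subpoly T (F1 X)) = F0 (tree_root (subpoly S X))"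
  using morphism unfolding poly_morphism_def tree_bar_poly_def sub_def by (cases X) auto

lemma F2_marked: "(X, l) \<in> sub' S \<Longrightarrow> F2 (X, l) = (F1 X, F0 l)"
proof -
  assume x: "(X, l) \<in> sub' S"
  have "fst (F2 (X, l)) = F1 X" "snd (F2 (X, l)) = F0 l"
    using morphism x unfolding poly_morphism_def tree_bar_poly_def by auto
  then show ?thesis by (simp add: prod_eq_iff)
qed

text \<open>The pullback condition: F0 maps the leaves of X onto the leaves of F1 X.\<close>

lemma F1_leaves:
  assumes X: "is_subtree S X"
  shows "leaves (subpoly T (F1 X)) = F0 ` leaves (subpoly S X)"
proof
  show "F0 ` leaves (subpoly S X) \<subseteq> leaves (subpoly T (F1 X))"
  proof
    fix l' assume "l' \<in> F0 ` leaves (subpoly S X)"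
    then obtain l where l: "l \<in> leaves (subpoly S X)" "l' = F0 l" by blast
    hence "(X, l) \<in> sub' S" using X by (simp add: sub'_iff)
    hence "F2 (X, l) \<in> sub' T" using morphism unfolding poly_morphism_def tree_bar_poly_def by auto
    thus "l' \<in> leaves (subpoly T (F1 X))" using F2_marked[OF \<open>(X, l) \<in> sub' S\<close>] l(2)
      by (simp add: sub'_iff)
  qed
  show "leaves (subpoly T (F1 X)) \<subseteq> F0 ` leaves (subpoly S X)"
  proof
    fix l' assume l': "l' \<in> leaves (subpoly T (F1 X))"
    have pullback: "bij_betw (\<lambda>x. (fst x, F2 x)) (sub' S) {(b, y). b \<in> sub S \<and> y \<in> sub' T \<and> F1 b = fst y}"
      using morphism unfolding poly_morphism_def tree_bar_poly_def by simp
    have "(F1 X, l') \<in> sub' T" using F1_subtree[OF X] l' by (simp add: sub'_iff)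
    hence "(X, (F1 X, l')) \<in> (\<lambda>x. (fst x, F2 x)) ` sub' S"
      using bij_betw_imp_surj_on[OF pullback] X unfolding sub_def by auto
    then obtain l where l: "(X, l) \<in> sub' S" "F2 (X, l) = (F1 X, l')" by auto
    hence "l' = F0 l" using F2_marked by simp
    with l(1) show "l' \<in> F0 ` leaves (subpoly S X)" by (simp add: sub'_iff)
  qed
qed

lemma F1_unit:
  assumes a: "a \<in> pc0 S"
  shows "F1 (trivial_subtree a) = trivial_subtree (F0 a)"
proof (rule sub_unique[OF tree_T])
  note triv_S = trivial_sub[OF tree_S a] and triv_T = trivial_sub[OF tree_T F0_edge[OF a]]
  show "is_subtree T (F1 (trivial_subtree a))" using F1_subtree[OF triv_S(1)] .
  show "is_subtree T (trivial_subtree (F0 a))" using triv_T(1) .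
  show "tree_root (subpoly T (F1 (trivial_subtree a))) = tree_root (subpoly T (trivial_subtree (F0 a)))"
    using F1_root[OF triv_S(1)] triv_S(2) triv_T(2) by simp
  show "leaves (subpoly T (F1 (trivial_subtree a))) = leaves (subpoly T (trivial_subtree (F0 a)))"
    using F1_leaves[OF triv_S(1)] triv_S(3) triv_T(3) by simp
qed

lemma F2_unit: "a \<in> pc0 S \<Longrightarrow> F2 (trivial_subtree a, a) = (trivial_subtree (F0 a), F0 a)"
  using F2_marked F1_unit trivial_sub[OF tree_S] by (simp add: sub'_iff)

text \<open>Multiplication: the image of a graft is a subtree with the same root and leaves as
  the graft of the images.\<close>

lemma F1_graft:
  assumes X: "is_subtree S X"
    and dS: "\<And>l. l \<in> leaves (subpoly S X) \<Longrightarrow>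
               is_subtree S (d (X, l)) \<and> tree_root (subpoly S (d (X, l))) = l"
    and d': "\<And>l. l \<in> leaves (subpoly S X) \<Longrightarrow> d' (F1 X, F0 l) = F1 (d (X, l))"
  shows "F1 (graft S X d) = graft T (F1 X) d'"
proof -
  note graft_S = graft_props[OF tree_S X dS]
  have dT: "is_subtree T (d' (F1 X, l')) \<and> tree_root (subpoly T (d' (F1 X, l'))) = l'"
    if l': "l' \<in> leaves (subpoly T (F1 X))" for l'
  proof -
    obtain l where l: "l \<in> leaves (subpoly S X)" "l' = F0 l" using l' F1_leaves[OF X] by blast
    show ?thesis using d'[OF l(1)] F1_subtree F1_root dS[OF l(1)] l(2) by simp
  qed
  note graft_T = graft_props[OF tree_T F1_subtree[OF X] dT]
  have "leaves (subpoly T (graft T (F1 X) d'))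
      = (\<Union>l \<in> leaves (subpoly S X). leaves (subpoly T (d' (F1 X, F0 l))))"
    using graft_T(3) F1_leaves[OF X] by simp
  also have "\<dots> = (\<Union>l \<in> leaves (subpoly S X). F0 ` leaves (subpoly S (d (X, l))))"
    using d' F1_leaves dS by simp
  also have "\<dots> = leaves (subpoly T (F1 (graft S X d)))"
    using graft_S(3) F1_leaves[OF graft_S(1)] by (simp add: image_UN)
  finally have leaves_eq: "leaves (subpoly T (F1 (graft S X d))) = leaves (subpoly T (graft T (F1 X) d'))" ..
  have root_eq: "tree_root (subpoly T (F1 (graft S X d))) = tree_root (subpoly T (graft T (F1 X) d'))"
    using F1_root[OF graft_S(1)] graft_S(2) graft_T(2) F1_root[OF X] by simp
  show ?thesis using sub_unique[OF tree_T F1_subtree[OF graft_S(1)] graft_T(1) root_eq leaves_eq] .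
qed

lemma multiplication_compat:
  assumes bd: "(X, d) \<in> comp1 (tree_bar_poly S)"
    and d': "\<forall>x \<in> fibre (tree_bar_poly S) X. d' (F2 x) = F1 (d x)"
  shows "F1 (graft S X d) = graft T (F1 X) d'"
    and "\<forall>x \<in> fibre (tree_bar_poly S) X. \<forall>x' \<in> fibre (tree_bar_poly S) (d x).
           F2 (graft S X d, snd x') = (graft T (F1 X) d', snd (F2 x'))"
proof -
  note X = comp1_tree_bar(1)[OF bd] and dS = comp1_tree_bar(2)[OF bd]
  have d'_leaf: "d' (F1 X, F0 l) = F1 (d (X, l))" if l: "l \<in> leaves (subpoly S X)" for l
  proof -
    have fib: "(X, l) \<in> fibre (tree_bar_poly S) X" using X l by (simp add: fibre_tree_bar_iff sub'_iff)
    show ?thesis using d'[rule_format, OF fib] F2_marked[of X l] X l by (simp add: sub'_iff)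
  qed
  show graft_eq: "F1 (graft S X d) = graft T (F1 X) d'" using F1_graft[OF X dS d'_leaf] .
  show "\<forall>x \<in> fibre (tree_bar_poly S) X. \<forall>x' \<in> fibre (tree_bar_poly S) (d x).
           F2 (graft S X d, snd x') = (graft T (F1 X) d', snd (F2 x'))"
  proof (intro ballI)
    fix x x' assume x: "x \<in> fibre (tree_bar_poly S) X" and x': "x' \<in> fibre (tree_bar_poly S) (d x)"
    obtain l where xl: "x = (X, l)" "l \<in> leaves (subpoly S X)"
      using x by (cases x) (auto simp: fibre_tree_bar_iff sub'_iff)
    obtain l' where xl': "x' = (d x, l')" "l' \<in> leaves (subpoly S (d x))" "x' \<in> sub' S"
      using x' by (cases x') (auto simp: fibre_tree_bar_iff sub'_iff)
    have "(graft S X d, l') \<in> sub' S"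
      using graft_props[OF tree_S X dS] xl xl' by (auto simp: sub'_iff)
    then show "F2 (graft S X d, snd x') = (graft T (F1 X) d', snd (F2 x'))"
      using F2_marked graft_eq xl'(1,3) by simp
  qed
qed

end

theorem mainTheorem11:
  fixes S :: "('e, 'o, 'i) poly" and T :: "('f, 'q, 'j) poly"
    and F0 :: "'e \<Rightarrow> 'f"
    and F1 :: "('e, 'o, 'i) subtr \<Rightarrow> ('f, 'q, 'j) subtr"
    and F2 :: "('e, 'o, 'i) subtr \<times> 'e \<Rightarrow> ('f, 'q, 'j) subtr \<times> 'f"
  assumes "is_tree S" and "is_tree T"
    and "poly_morphism (tree_bar_poly S) (tree_bar_poly T) F0 F1 F2"
  shows "monad_morphism (tree_bar S) (tree_bar T) F0 F1 F2"
proof -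
  interpret tree_bar_map S T F0 F1 F2 using assms by (rule tree_bar_map.intro)
  have units: "\<forall>a \<in> pc0 (tree_bar_poly S). F1 (trivial_subtree a) = trivial_subtree (F0 a)
      \<and> F2 (trivial_subtree a, a) = (trivial_subtree (F0 a), F0 a)"
    using F1_unit F2_unit by (simp add: tree_bar_poly_def)
  have multiplication: "\<forall>(X, d) \<in> comp1 (tree_bar_poly S). \<forall>d'.
      (d' \<in> extensional (fibre (tree_bar_poly T) (F1 X))
        \<and> (\<forall>x \<in> fibre (tree_bar_poly S) X. d' (F2 x) = F1 (d x)))
      \<longrightarrow> F1 (graft S X d) = graft T (F1 X) d'
        \<and> (\<forall>x \<in> fibre (tree_bar_poly S) X. \<forall>x' \<in> fibre (tree_bar_poly S) (d x).
             F2 (graft S X d, snd x') = (graft T (F1 X) d', snd (F2 x')))"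
    using multiplication_compat by blast
  show ?thesis
    unfolding monad_morphism_def using assms(3) units multiplication by (simp add: tree_bar_def)
qed

end
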